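(* Let $N$ be a phylogenetic network on $X$, and let $O$ and $R$ be the sets of omnians and reticulations of $N$. Then $$l(N)=p(N)=t(N)=|O|-m(\mathcal{B}_N),$$ where $m(\mathcal{B}_N)$ is the size of a maximum matching of $\mathcal{B}_N$.
   Context: $X$ is a nonempty finite set. A phylogenetic network on $X$ is a rooted acyclic digraph with no parallel arcs such that: the unique root has out-degree at least one; $X$ is exactly the set of vertices of out-degree zero (leaves), each of in-degree one; every other vertex either has in-degree one and out-degree at least two (a tree vertex) or in-degree at least two and out-degree one (a reticulation). If $|X|=1$, the network may also consist of the single vertex in $X$. An omnian is a non-leaf vertex all of whose children are reticulations (an omnian may itself be a reticulation). $\mathcal{B}_N$ is the bipartite graph with vertex bipartition $\{O,R\}$ (taken as disjoint copies) with an edge $\{o,r\}$ for each arc $(o,r)$ of $N$ with $o\in O$, $r\in R$. A phylogenetic network $N$ on $X$ is tree-based if it can be obtained from some phylogenetic $X$-tree (phylogenetic network with no reticulations) $T$ by first taking a subdivision of $T$ (new vertices are attachment points) and then adding new arcs $(u,v)$ where either $u$ and $v$ are both attachment points, or $u$ is a non-leaf vertex of $T$ and $v$ is an attachment point; equivalently, $N$ has a rooted spanning tree with the same root as $N$ all of whose leaves lie in $X$. Attaching a new leaf to $N$ means subdividing an arc of $N$ with a new vertex $u$ and adding a new leaf $y$ and the arc $(u,y)$. Define: $l(N)$ is the minimum, over all spanning trees of $N$ rooted at the root of $N$, of the number of leaves of the spanning tree not in $X$; $p(N)=d(N)-|X|$ where $d(N)$ is the smallest number of vertex-disjoint directed paths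 of $N$ that partition its vertex set; $t(N)$ is the minimum number of new leaves that need to be attached (successively) to $N$ so that the resulting network is tree-based. *)

theory Defs
  imports Main
begin

(* A network is given by a vertex set V, an arc set A (no parallel arcs, since
   A is a set of pairs) and a leaf set X.  Vertices are natural numbers, so that
   fresh vertices for leaf attachment always exist. *)

definition indeg :: "(nat \<times> nat) set \<Rightarrow> nat \<Rightarrow> nat" where
  "indeg A v = card {u. (u, v) \<in> A}"

definition outdeg :: "(nat \<times> nat) set \<Rightarrow> nat \<Rightarrow> nat" where
  "outdeg A v = card {w. (v, w) \<in> A}"

definition phylo_net :: "nat set \<Rightarrow> (nat \<times> nat) set \<Rightarrow> nat set \<Rightarrow> bool" where
  "phylo_net V A X \<longleftrightarrow>
     finite V \<and> X \<noteq> {} \<and> A \<subseteq> V \<times> V \<and>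
     ((card X = 1 \<and> V = X \<and> A = {}) \<or>
      (acyclic A \<and>
       (\<exists>!r. r \<in> V \<and> indeg A r = 0) \<and>
       (\<forall>r\<in>V. indeg A r = 0 \<longrightarrow> outdeg A r \<ge> 1) \<and>
       X = {v \<in> V. outdeg A v = 0} \<and>
       (\<forall>x\<in>X. indeg A x = 1) \<and>
       (\<forall>v\<in>V. indeg A v \<noteq> 0 \<and> v \<notin> X \<longrightarrow>
          (indeg A v = 1 \<and> outdeg A v \<ge> 2) \<or> (indeg A v \<ge> 2 \<and> outdeg A v = 1))))"

definition root :: "nat set \<Rightarrow> (nat \<times> nat) set \<Rightarrow> nat" where
  "root V A = (THE r. r \<in> V \<and> indeg A r = 0)"

definition reticulation :: "nat set \<Rightarrow> (nat \<times> nat) set \<Rightarrow> nat \<Rightarrow> bool" where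
  "reticulation V A v \<longleftrightarrow> v \<in> V \<and> indeg A v \<ge> 2"

definition reticulations :: "nat set \<Rightarrow> (nat \<times> nat) set \<Rightarrow> nat set" where
  "reticulations V A = {v \<in> V. reticulation V A v}"

definition omnians :: "nat set \<Rightarrow> (nat \<times> nat) set \<Rightarrow> nat set \<Rightarrow> nat set" where
  "omnians V A X = {v \<in> V. v \<notin> X \<and> (\<forall>w. (v, w) \<in> A \<longrightarrow> reticulation V A w)}"

(* matchings of the bipartite graph B_N: an edge {o,r} of B_N corresponds to an
   arc (o,r) of N with o an omnian and r a reticulation; since O and R are taken
   as disjoint copies, a matching is a set of such arcs no two sharing a tail
   and no two sharing a head. *)
definition BN_matching :: "nat set \<Rightarrow> (nat \<times> nat) set \<Rightarrow> nat set \<Rightarrow> (nat \<times> nat) set \<Rightarrow> bool" where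
  "BN_matching V A X M \<longleftrightarrow>
     M \<subseteq> A \<and> (\<forall>(o', r)\<in>M. o' \<in> omnians V A X \<and> r \<in> reticulations V A) \<and>
     (\<forall>(a, b)\<in>M. \<forall>(c, d)\<in>M. (a = c \<or> b = d) \<longrightarrow> (a, b) = (c, d))"

definition max_matching_size :: "nat set \<Rightarrow> (nat \<times> nat) set \<Rightarrow> nat set \<Rightarrow> nat" where
  "max_matching_size V A X = Max {card M | M. BN_matching V A X M}"

definition rooted_spanning_tree :: "nat set \<Rightarrow> (nat \<times> nat) set \<Rightarrow> (nat \<times> nat) set \<Rightarrow> bool" where
  "rooted_spanning_tree V A T \<longleftrightarrow>
     T \<subseteq> A \<and>
     (\<forall>v\<in>V. v \<noteq> root V A \<longrightarrow> card {u. (u, v) \<in> T} = 1) \<and>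
     (\<forall>v\<in>V. (root V A, v) \<in> T\<^sup>*)"

definition tree_leaves :: "nat set \<Rightarrow> (nat \<times> nat) set \<Rightarrow> nat set" where
  "tree_leaves V T = {v \<in> V. \<forall>w. (v, w) \<notin> T}"

definition l_num :: "nat set \<Rightarrow> (nat \<times> nat) set \<Rightarrow> nat set \<Rightarrow> nat" where
  "l_num V A X = (LEAST k. \<exists>T. rooted_spanning_tree V A T \<and> card (tree_leaves V T - X) = k)"

definition tree_based :: "nat set \<Rightarrow> (nat \<times> nat) set \<Rightarrow> nat set \<Rightarrow> bool" where
  "tree_based V A X \<longleftrightarrow> (\<exists>T. rooted_spanning_tree V A T \<and> tree_leaves V T \<subseteq> X)"

definition dpath :: "nat set \<Rightarrow> (nat \<times> nat) set \<Rightarrow> nat list \<Rightarrow> bool" where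
  "dpath V A p \<longleftrightarrow> p \<noteq> [] \<and> distinct p \<and> set p \<subseteq> V \<and>
     (\<forall>i. Suc i < length p \<longrightarrow> (p ! i, p ! Suc i) \<in> A)"

definition path_partition :: "nat set \<Rightarrow> (nat \<times> nat) set \<Rightarrow> nat list set \<Rightarrow> bool" where
  "path_partition V A P \<longleftrightarrow> finite P \<and> (\<forall>p\<in>P. dpath V A p) \<and>
     (\<forall>p\<in>P. \<forall>q\<in>P. p \<noteq> q \<longrightarrow> set p \<inter> set q = {}) \<and>
     (\<Union>p\<in>P. set p) = V"

definition d_num :: "nat set \<Rightarrow> (nat \<times> nat) set \<Rightarrow> nat" where
  "d_num V A = (LEAST k. \<exists>P. path_partition V A P \<and> card P = k)"

definition p_num :: "nat set \<Rightarrow> (nat \<times> nat) set \<Rightarrow> nat set \<Rightarrow> int" where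
  "p_num V A X = int (d_num V A) - int (card X)"

type_synonym net = "nat set \<times> (nat \<times> nat) set \<times> nat set"

definition attach_leaf_rel :: "(net \<times> net) set" where
  "attach_leaf_rel = {((V, A, X), (V', A', X')) | V A X V' A' X'.
     \<exists>u v w y. (u, v) \<in> A \<and> w \<notin> V \<and> y \<notin> V \<and> w \<noteq> y \<and>
       V' = V \<union> {w, y} \<and>
       A' = (A - {(u, v)}) \<union> {(u, w), (w, v), (w, y)} \<and>
       X' = X \<union> {y}}"

definition t_num :: "nat set \<Rightarrow> (nat \<times> nat) set \<Rightarrow> nat set \<Rightarrow> nat" where
  "t_num V A X = (LEAST k. \<exists>V' A' X'.
      ((V, A, X), (V', A', X')) \<in> attach_leaf_rel ^^ k \<and> tree_based V' A' X')"

end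

theory Submission
  imports Defs
begin

text \<open>
  In a spanning tree rooted at the root, a non-leaf vertex v without tree children has all its
  children attached to other tree parents, so they are reticulations and v is an omnian; the tree
  arcs leaving omnians have distinct heads and hence contain a matching of \<open>B\<^sub>N\<close> covering
  every omnian that is not a tree leaf. Conversely, letting each reticulation of a maximum matching
  take its partner as tree parent leaves at most \<open>|O| - m\<close> omnians childless, so
  \<open>l(N) = |O| - m\<close>.

  The successor arcs of a path partition have distinct tails and distinct heads; those leaving
  omnians carry a matching, and the others leave non-leaf non-omnians. Conversely a maximum
  matching together with one arc from every non-leaf non-omnian to a non-reticulation child has
  distinct tails and heads, so, the network being acyclic, it is the successor relation of a path
  partition. Both directions give \<open>d(N) = |X| + |O| - m\<close>.

  Attaching a leaf lowers \<open>l\<close> by at most one, and attaching it below a childless non-leaf of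
  an optimal spanning tree lowers \<open>l\<close> by exactly one, whence \<open>t(N) = l(N)\<close>.
\<close>

section \<open>Path partitions\<close>

lemma successively_iff_nth:
  "successively P xs \<longleftrightarrow> (\<forall>i. Suc i < length xs \<longrightarrow> P (xs ! i) (xs ! Suc i))"
proof (induction xs)
  case (Cons x xs)
  then show ?case
    by (cases xs) (auto simp: successively_Cons nth_Cons split: nat.splits)
qed simp

lemma dpath_iff_successively:
  "dpath V A p \<longleftrightarrow> p \<noteq> [] \<and> distinct p \<and> set p \<subseteq> V \<and> successively (\<lambda>x y. (x, y) \<in> A) p"
  unfolding dpath_def successively_iff_nth ..

lemma successively_hd_last_rtrancl:
  "successively (\<lambda>x y. (x, y) \<in> S) p \<Longrightarrow> p \<noteq> [] \<Longrightarrow> (hd p, last p) \<in> S\<^sup>*"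
  by (induction p) (auto simp: successively_Cons intro: converse_rtrancl_into_rtrancl)

lemma successively_last_if_no_successor:
  "successively R p \<Longrightarrow> v \<in> set p \<Longrightarrow> (\<And>w. \<not> R v w) \<Longrightarrow> v = last p"
  by (induction p) (auto simp: successively_Cons)

lemma successively_hd_if_no_predecessor:
  "successively R p \<Longrightarrow> v \<in> set p \<Longrightarrow> (\<And>u. \<not> R u v) \<Longrightarrow> v = hd p"
  by (induction p) (auto simp: successively_Cons)

lemma dpath_mono: "dpath V S p \<Longrightarrow> S \<subseteq> A \<Longrightarrow> dpath V A p"
  unfolding dpath_def by auto

lemma path_partition_mono:
  "path_partition V S P \<Longrightarrow> S \<subseteq> A \<Longrightarrow> path_partition V A P"
  unfolding path_partition_def using dpath_mono by blast

lemma path_partition_singletons: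
  assumes "finite V"
  shows "path_partition V S ((\<lambda>v. [v]) ` V)" and "card ((\<lambda>v. [v]) ` V) = card V"
  using assms unfolding path_partition_def dpath_def by (auto intro: card_image simp: inj_on_def)

lemma disjoint_sets_merge:
  assumes disj: "\<And>p q. p \<in> P \<Longrightarrow> q \<in> P \<Longrightarrow> p \<noteq> q \<Longrightarrow> set p \<inter> set q = {}"
    and pab: "pa \<in> P" "pb \<in> P"
    and p: "p \<in> insert (pa @ pb) (P - {pa, pb})" and q: "q \<in> insert (pa @ pb) (P - {pa, pb})"
    and "p \<noteq> q"
  shows "set p \<inter> set q = {}"
proof -
  have merged: "set (pa @ pb) \<inter> set r = {}" if "r \<in> P - {pa, pb}" for r
    using disj[OF pab(1), of r] disj[OF pab(2), of r] that by auto
  from p q \<open>p \<noteq> q\<close> consider "p = pa @ pb" "q \<in> P - {pa, pb}" | "q = pa @ pb" "p \<in> P - {pa, pb}"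
    | "p \<in> P" "q \<in> P" by auto
  then show ?thesis
  proof cases
    case 1
    then show ?thesis using merged by simp
  next
    case 2
    then show ?thesis using merged[of p] by (simp add: Int_commute)
  next
    case 3
    then show ?thesis using disj \<open>p \<noteq> q\<close> by blast
  qed
qed

lemma path_partition_merge:
  assumes P: "path_partition V S P" and pab: "pa \<in> P" "pb \<in> P" "pa \<noteq> pb"
    and S': "S \<subseteq> S'" "(last pa, hd pb) \<in> S'"
  defines "P' \<equiv> insert (pa @ pb) (P - {pa, pb})"
  shows "path_partition V S' P'" and "card P' + 1 = card P"
proof -
  have fin: "finite P" and paths: "\<And>p. p \<in> P \<Longrightarrow> dpath V S p"
    and disj: "\<And>p q. p \<in> P \<Longrightarrow> q \<in> P \<Longrightarrow> p \<noteq> q \<Longrightarrow> set p \<inter> set q = {}"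
    and cover: "(\<Union>p\<in>P. set p) = V"
    using P unfolding path_partition_def by auto
  have paths': "dpath V S' p" if "p \<in> P" for p
    using dpath_mono[OF paths[OF that] S'(1)] .
  have merged: "dpath V S' (pa @ pb)"
    using paths'[OF pab(1)] paths'[OF pab(2)] disj[OF pab] S'(2)
    unfolding dpath_iff_successively by (auto simp: successively_append_iff)
  show "path_partition V S' P'"
    unfolding path_partition_def
  proof (intro conjI ballI impI)
    show "dpath V S' p" if "p \<in> P'" for p
      using that merged paths' unfolding P'_def by blast
    show "set p \<inter> set q = {}" if "p \<in> P'" "q \<in> P'" "p \<noteq> q" for p q
      using disjoint_sets_merge[OF disj pab(1,2)] that unfolding P'_def by blast
    show "(\<Union>p\<in>P'. set p) = V"
      using cover pab unfolding P'_def by auto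
  qed (use fin in \<open>simp add: P'_def\<close>)
  have "pa @ pb \<notin> P - {pa, pb}"
  proof
    assume "pa @ pb \<in> P - {pa, pb}"
    then have "set (pa @ pb) \<inter> set pa = {}" using disj pab(1) by blast
    then show False using paths[OF pab(1)] unfolding dpath_def by auto
  qed
  moreover have "card {pa, pb} \<le> card P" using pab fin by (intro card_mono) auto
  ultimately show "card P' + 1 = card P"
    unfolding P'_def using fin pab by (simp add: card_Diff_subset)
qed

text \<open>An arc from the end of one path to the start of another joins the two paths.\<close>
lemma path_partition_insert_arc:
  assumes P: "path_partition V S P" and ab: "a \<in> V" "b \<in> V"
    and no_succ: "\<And>z. (a, z) \<notin> S" and no_pred: "\<And>z. (z, b) \<notin> S" and no_path: "(b, a) \<notin> S\<^sup>*"
  obtains P' where "path_partition V (insert (a, b) S) P'" and "card P' + 1 = card P"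
proof -
  obtain pa pb where pa: "pa \<in> P" "a \<in> set pa" and pb: "pb \<in> P" "b \<in> set pb"
    using P ab unfolding path_partition_def by blast
  have succ: "successively (\<lambda>x y. (x, y) \<in> S) p" "p \<noteq> []" if "p \<in> P" for p
    using P that unfolding path_partition_def dpath_iff_successively by blast+
  have last_pa: "last pa = a"
    using successively_last_if_no_successor[of "\<lambda>x y. (x, y) \<in> S" pa a] succ[OF pa(1)] pa(2) no_succ
    by auto
  have hd_pb: "hd pb = b"
    using successively_hd_if_no_predecessor[of "\<lambda>x y. (x, y) \<in> S" pb b] succ[OF pb(1)] pb(2) no_pred
    by auto
  have "pa \<noteq> pb"
    using successively_hd_last_rtrancl[OF succ[OF pa(1)]] last_pa hd_pb no_path by auto
  then show ?thesis
    using path_partition_merge[OF P pa(1) pb(1), of "insert (a, b) S"] last_pa hd_pb that by blast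
qed

lemma path_partition_of_linear_forest:
  assumes V: "finite V" "S \<subseteq> V \<times> V"
    and S: "acyclic S" "single_valued S" "single_valued (converse S)"
  shows "\<exists>P. path_partition V S P \<and> card P + card S = card V"
proof -
  have "finite S" using finite_subset[OF V(2)] V(1) by simp
  then show ?thesis using V(2) S
  proof (induction S rule: finite_induct)
    case empty
    then show ?case using path_partition_singletons[OF V(1)] by auto
  next
    case (insert e S)
    obtain a b where e: "e = (a, b)" by (cases e)
    have "acyclic S" using insert.prems(2) by (rule acyclic_subset) auto
    moreover have "single_valued S" by (rule single_valued_subset[OF _ insert.prems(3)]) auto
    moreover have "single_valued (converse S)"
      by (rule single_valued_subset[OF _ insert.prems(4)]) auto
    ultimately obtain P where P: "path_partition V S P" "card P + card S = card V"
      using insert.IH insert.prems(1) by blast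
    have "(a, z) \<notin> S" "(z, b) \<notin> S" for z
      using insert.prems(3,4) insert.hyps(2) e unfolding single_valued_def by blast+
    moreover have "(b, a) \<notin> S\<^sup>*"
      using insert.prems(2) e rtrancl_mono[of S "insert e S"]
      unfolding acyclic_def by (blast intro: rtrancl_into_trancl2)
    moreover have "a \<in> V" "b \<in> V" using insert.prems(1) e by auto
    ultimately obtain P' where "path_partition V (insert e S) P'" "card P' + 1 = card P"
      using path_partition_insert_arc[OF P(1)] e by metis
    then show ?case using P(2) insert.hyps by (intro exI[of _ P']) simp
  qed
qed

definition path_successors :: "nat list set \<Rightarrow> (nat \<times> nat) set" where
  "path_successors P = {(p ! i, p ! Suc i) | p i. p \<in> P \<and> Suc i < length p}"

lemma path_partition_index_unique:
  assumes P: "path_partition V A P" and "p \<in> P" "q \<in> P" "i < length p" "j < length q"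
    and "p ! i = q ! j"
  shows "p = q \<and> i = j"
proof -
  have "p = q"
    using P assms(2-6) nth_mem unfolding path_partition_def by (metis disjoint_iff)
  moreover have "distinct p" using P assms(2) unfolding path_partition_def dpath_def by blast
  ultimately show ?thesis using assms(4-6) nth_eq_iff_index_eq by blast
qed

lemma path_successors_subset:
  "path_partition V A P \<Longrightarrow> path_successors P \<subseteq> A"
  unfolding path_partition_def dpath_def path_successors_def by blast

lemma single_valued_path_successors:
  assumes P: "path_partition V A P"
  shows "single_valued (path_successors P)"
proof (rule single_valuedI)
  fix x y z assume "(x, y) \<in> path_successors P" "(x, z) \<in> path_successors P"
  then obtain p i q j where "p \<in> P" "Suc i < length p" "x = p ! i" "y = p ! Suc i"
    and "q \<in> P" "Suc j < length q" "x = q ! j" "z = q ! Suc j"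
    unfolding path_successors_def by blast
  then show "y = z" using path_partition_index_unique[OF P, of p q i j] by simp
qed

lemma single_valued_converse_path_successors:
  assumes P: "path_partition V A P"
  shows "single_valued (converse (path_successors P))"
proof (rule single_valuedI)
  fix x y z assume "(x, y) \<in> converse (path_successors P)" "(x, z) \<in> converse (path_successors P)"
  then obtain p i q j where "p \<in> P" "Suc i < length p" "x = p ! Suc i" "y = p ! i"
    and "q \<in> P" "Suc j < length q" "x = q ! Suc j" "z = q ! j"
    unfolding path_successors_def by blast
  then show "y = z" using path_partition_index_unique[OF P, of p q "Suc i" "Suc j"] by simp
qed

lemma path_partition_last_nth:
  "path_partition V A P \<Longrightarrow> p \<in> P \<Longrightarrow> last p = p ! (length p - 1) \<and> p \<noteq> []"
  unfolding path_partition_def dpath_def by (simp add: last_conv_nth)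

lemma Domain_path_successors_Un_last:
  assumes P: "path_partition V A P"
  shows "Domain (path_successors P) \<union> last ` P = V"
proof
  have cover: "(\<Union>p\<in>P. set p) = V" using P unfolding path_partition_def by blast
  show "V \<subseteq> Domain (path_successors P) \<union> last ` P"
  proof
    fix v assume "v \<in> V"
    then obtain p i where pi: "p \<in> P" "i < length p" "v = p ! i"
      using cover by (metis UN_E in_set_conv_nth)
    show "v \<in> Domain (path_successors P) \<union> last ` P"
    proof (cases "Suc i < length p")
      case True
      then have "(v, p ! Suc i) \<in> path_successors P" using pi unfolding path_successors_def by blast
      then show ?thesis by blast
    next
      case False
      then have "i = length p - 1" using pi(2) by simp
      then have "v = last p" using pi path_partition_last_nth[OF P pi(1)] by simp
      then show ?thesis using pi(1) by blast
    qed
  qed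
  show "Domain (path_successors P) \<union> last ` P \<subseteq> V"
  proof
    fix v assume "v \<in> Domain (path_successors P) \<union> last ` P"
    then obtain p where "p \<in> P" "v \<in> set p"
      unfolding path_successors_def using path_partition_last_nth[OF P]
      by (auto dest!: Suc_lessD)
    then show "v \<in> V" using cover by blast
  qed
qed

lemma Domain_path_successors_Int_last:
  assumes P: "path_partition V A P"
  shows "Domain (path_successors P) \<inter> last ` P = {}"
proof (rule ccontr)
  assume "Domain (path_successors P) \<inter> last ` P \<noteq> {}"
  then obtain p i q where "p \<in> P" "Suc i < length p" "q \<in> P" "p ! i = q ! (length q - 1)"
    unfolding path_successors_def using path_partition_last_nth[OF P] by fastforce
  then show False
    using path_partition_index_unique[OF P, of p q i "length q - 1"] path_partition_last_nth[OF P]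
    by fastforce
qed

lemma inj_on_last_path_partition:
  assumes P: "path_partition V A P"
  shows "inj_on last P"
proof (rule inj_onI)
  fix p q assume "p \<in> P" "q \<in> P" "last p = last q"
  then show "p = q"
    using path_partition_index_unique[OF P, of p q "length p - 1" "length q - 1"]
      path_partition_last_nth[OF P] by fastforce
qed

lemma card_path_successors:
  assumes P: "path_partition V A P"
  shows "card P + card (path_successors P) = card V"
proof -
  have "inj_on fst (path_successors P)"
    using single_valued_path_successors[OF P] unfolding inj_on_def single_valued_def by auto
  then have "card (Domain (path_successors P)) = card (path_successors P)"
    by (simp add: Domain_fst card_image)
  moreover have "finite V"
    using P unfolding path_partition_def by auto
  ultimately show ?thesis
    using Domain_path_successors_Un_last[OF P] Domain_path_successors_Int_last[OF P]
      inj_on_last_path_partition[OF P]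
    by (metis add.commute card_Un_disjoint card_image finite_Un)
qed

section \<open>Rooted acyclic digraphs\<close>

locale rooted_dag =
  fixes V :: "nat set" and A :: "(nat \<times> nat) set" and X :: "nat set" and r :: nat
  assumes finite_V: "finite V"
    and arcs_in_V: "A \<subseteq> V \<times> V"
    and acyclic_A: "acyclic A"
    and root_in_V: "r \<in> V"
    and parentless_iff_root: "z \<in> V \<Longrightarrow> (\<forall>x. (x, z) \<notin> A) \<longleftrightarrow> z = r"
    and leaves_eq_sinks: "X = {v \<in> V. \<forall>z. (v, z) \<notin> A}"
begin

lemma finite_A: "finite A"
  using finite_V arcs_in_V finite_subset by blast

lemma finite_parents: "finite {u. (u, z) \<in> A}"
  by (rule finite_subset[of _ "fst ` A"]) (use finite_A in force)+

lemma root_eq: "root V A = r"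
  unfolding root_def
proof (rule the_equality)
  show "r \<in> V \<and> indeg A r = 0"
    using root_in_V parentless_iff_root[OF root_in_V] by (simp add: indeg_def)
next
  fix z assume "z \<in> V \<and> indeg A z = 0"
  then show "z = r" using parentless_iff_root finite_parents by (auto simp: indeg_def)
qed

lemma X_subset_V: "X \<subseteq> V"
  using leaves_eq_sinks by auto

lemma omnians_subset: "omnians V A X \<subseteq> V - X"
  unfolding omnians_def by auto

lemma finite_omnians: "finite (omnians V A X)"
  using omnians_subset finite_V finite_subset by blast

lemma parent_unique_if_not_reticulation:
  assumes "\<not> reticulation V A z" "(u, z) \<in> A" "(u', z) \<in> A"
  shows "u = u'"
proof -
  have "z \<in> V" using assms(2) arcs_in_V by auto
  then have "card {u. (u, z) \<in> A} \<le> 1"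
    using assms(1) unfolding reticulation_def indeg_def by simp
  then show ?thesis
    using card_le_Suc0_iff_eq[OF finite_parents] assms(2,3) by auto
qed

end

lemma phylo_net_rooted_dag:
  assumes "phylo_net V A X"
  shows "rooted_dag V A X (root V A)"
proof -
  have fV: "finite V" and AV: "A \<subseteq> V \<times> V" using assms unfolding phylo_net_def by auto
  have fA: "finite A" using fV AV finite_subset by blast
  have indeg0: "indeg A z = 0 \<longleftrightarrow> (\<forall>x. (x, z) \<notin> A)" for z
    unfolding indeg_def by (subst card_eq_0_iff) (use fA in \<open>force intro: finite_subset[of _ "fst ` A"]\<close>)
  have outdeg0: "outdeg A z = 0 \<longleftrightarrow> (\<forall>x. (z, x) \<notin> A)" for z
    unfolding outdeg_def by (subst card_eq_0_iff) (use fA in \<open>force intro: finite_subset[of _ "snd ` A"]\<close>)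
  consider (single) "card X = 1" "V = X" "A = {}"
    | (net) "acyclic A" "\<exists>!r. r \<in> V \<and> indeg A r = 0" "X = {v \<in> V. outdeg A v = 0}"
    using assms unfolding phylo_net_def by blast
  then show ?thesis
  proof cases
    case single
    then obtain x where x: "V = {x}" by (metis card_1_singletonE)
    moreover have "root V A = x" unfolding root_def x using single by (auto simp: indeg_def)
    ultimately show ?thesis using single by unfold_locales (simp_all add: acyclic_def)
  next
    case net
    then have "\<exists>!r. r \<in> V \<and> (\<forall>x. (x, r) \<notin> A)" using indeg0 by simp
    moreover from this have "root V A \<in> V \<and> (\<forall>x. (x, root V A) \<notin> A)"
      unfolding root_def indeg0 by (rule theI')
    ultimately show ?thesis
      using fV AV net(1,3) unfolding outdeg0 by unfold_locales blast+
  qed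
qed


context rooted_dag
begin

section \<open>Spanning trees\<close>

lemma rooted_spanning_tree_iff:
  "rooted_spanning_tree V A T \<longleftrightarrow> T \<subseteq> A \<and> (\<forall>v\<in>V - {r}. card {u. (u, v) \<in> T} = 1)"
proof
  assume "rooted_spanning_tree V A T"
  then show "T \<subseteq> A \<and> (\<forall>v\<in>V - {r}. card {u. (u, v) \<in> T} = 1)"
    unfolding rooted_spanning_tree_def root_eq by auto
next
  assume T: "T \<subseteq> A \<and> (\<forall>v\<in>V - {r}. card {u. (u, v) \<in> T} = 1)"
  have "wf A" using finite_acyclic_wf[OF finite_A acyclic_A] .
  then have "z \<in> V \<longrightarrow> (r, z) \<in> T\<^sup>*" for z
  proof (induction z rule: wf_induct_rule)
    case (less z)
    show ?case
    proof (intro impI)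
      assume z: "z \<in> V"
      show "(r, z) \<in> T\<^sup>*"
      proof (cases "z = r")
        case False
        then have "card {u. (u, z) \<in> T} = 1" using T z by auto
        then obtain u where u: "(u, z) \<in> T" by (metis card_1_singletonE insertI1 mem_Collect_eq)
        then have "(u, z) \<in> A" "u \<in> V" using T arcs_in_V by auto
        with less have "(r, u) \<in> T\<^sup>*" by blast
        then show ?thesis using u by (rule rtrancl_into_rtrancl)
      qed simp
    qed
  qed
  with T show "rooted_spanning_tree V A T"
    unfolding rooted_spanning_tree_def root_eq by auto
qed

lemma tree_parent_exists:
  assumes "rooted_spanning_tree V A T" "v \<in> V" "v \<noteq> r"
  obtains u where "(u, v) \<in> T"
proof -
  have "card {u. (u, v) \<in> T} = 1" using assms unfolding rooted_spanning_tree_iff by blast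
  then show ?thesis using that by (auto simp: card_Suc_eq)
qed

lemma tree_parent_unique:
  assumes T: "rooted_spanning_tree V A T" and "(u, z) \<in> T" "(u', z) \<in> T"
  shows "u = u'"
proof -
  have "T \<subseteq> A" using T unfolding rooted_spanning_tree_iff by simp
  with assms(2) have "z \<in> V" "z \<noteq> r" using arcs_in_V parentless_iff_root by auto
  then have "card {u. (u, z) \<in> T} = 1" using T unfolding rooted_spanning_tree_iff by simp
  with assms(2,3) show ?thesis by (auto simp: card_Suc_eq) (metis mem_Collect_eq singletonD)
qed

lemma rooted_spanning_tree_of_parent_fun:
  assumes "\<forall>v\<in>V - {r}. (f v, v) \<in> A"
  shows "rooted_spanning_tree V A {(f v, v) | v. v \<in> V - {r}}"
proof -
  have "{u. (u, v) \<in> {(f v, v) | v. v \<in> V - {r}}} = {f v}" if "v \<in> V - {r}" for v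
    using that by auto
  with assms show ?thesis unfolding rooted_spanning_tree_iff by auto
qed

text \<open>Each child of a childless tree vertex has another tree parent, so it is a reticulation.\<close>
lemma tree_leaves_Diff_X:
  assumes T: "rooted_spanning_tree V A T"
  shows "tree_leaves V T - X = omnians V A X - Domain T"
proof
  show "tree_leaves V T - X \<subseteq> omnians V A X - Domain T"
  proof
    fix v assume v: "v \<in> tree_leaves V T - X"
    have "reticulation V A z" if vz: "(v, z) \<in> A" for z
    proof (rule ccontr)
      assume nr: "\<not> reticulation V A z"
      have "z \<in> V" "z \<noteq> r" using vz arcs_in_V parentless_iff_root by auto
      then obtain u where u: "(u, z) \<in> T" using tree_parent_exists[OF T] by blast
      then have "(u, z) \<in> A" using T unfolding rooted_spanning_tree_iff by auto
      then have "u = v" using parent_unique_if_not_reticulation[OF nr _ vz] by simp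
      with u v show False unfolding tree_leaves_def by auto
    qed
    with v show "v \<in> omnians V A X - Domain T"
      unfolding omnians_def tree_leaves_def by auto
  qed
qed (auto simp: omnians_def tree_leaves_def)

section \<open>Matchings and leaves of spanning trees\<close>

lemma card_le_max_matching_size:
  "BN_matching V A X M \<Longrightarrow> card M \<le> max_matching_size V A X"
  and max_matching_exists:
  "\<exists>M. BN_matching V A X M \<and> card M = max_matching_size V A X"
proof -
  let ?S = "{card M | M. BN_matching V A X M}"
  have "?S \<subseteq> {..card A}"
    using card_mono[OF finite_A] unfolding BN_matching_def by auto
  then have "finite ?S" using finite_subset by blast
  moreover have "BN_matching V A X {}" unfolding BN_matching_def by simp
  ultimately show "BN_matching V A X M \<Longrightarrow> card M \<le> max_matching_size V A X"
    and "\<exists>M. BN_matching V A X M \<and> card M = max_matching_size V A X"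
    unfolding max_matching_size_def by (auto intro: Max_ge) (use Max_in[of ?S] in \<open>auto simp: eq_commute\<close>)
qed

lemma BN_matching_Domain_subset:
  "BN_matching V A X M \<Longrightarrow> Domain M \<subseteq> omnians V A X"
  unfolding BN_matching_def by auto

lemma card_Domain_BN_matching:
  assumes "BN_matching V A X M"
  shows "card (Domain M) = card M"
proof -
  have "inj_on fst M"
  proof (rule inj_onI)
    fix x y assume "x \<in> M" "y \<in> M" "fst x = fst y"
    with assms show "x = y" unfolding BN_matching_def by (cases x, cases y) auto
  qed
  then show ?thesis by (simp add: Domain_fst card_image)
qed

lemma max_matching_size_le_omnians:
  "max_matching_size V A X \<le> card (omnians V A X)"
proof -
  obtain M where "BN_matching V A X M" "card M = max_matching_size V A X"
    using max_matching_exists by blast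
  then show ?thesis
    using card_mono[OF finite_omnians BN_matching_Domain_subset] card_Domain_BN_matching by metis
qed

text \<open>Keeping one arc per tail gives the matching.\<close>
lemma card_Domain_le_max_matching_size:
  assumes B: "B \<subseteq> A" "Domain B \<subseteq> omnians V A X" and heads: "single_valued (converse B)"
  shows "card (Domain B) \<le> max_matching_size V A X"
proof -
  define c where "c q = (SOME z. (q, z) \<in> B)" for q
  have c: "(q, c q) \<in> B" if "q \<in> Domain B" for q
    using that unfolding c_def by (auto intro: someI)
  define M where "M = (\<lambda>q. (q, c q)) ` Domain B"
  have inj: "inj_on c (Domain B)"
    using c heads by (intro inj_onI) (metis converseI single_valued_def)
  have ret: "c q \<in> reticulations V A" if "q \<in> Domain B" for q
    using that B c unfolding omnians_def reticulations_def reticulation_def by blast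
  have "BN_matching V A X M"
    unfolding BN_matching_def
  proof (intro conjI)
    show "M \<subseteq> A" using B(1) c unfolding M_def by auto
    show "\<forall>(q, z)\<in>M. q \<in> omnians V A X \<and> z \<in> reticulations V A"
      using B(2) ret unfolding M_def by auto
    show "\<forall>(a, b)\<in>M. \<forall>(a', b')\<in>M. a = a' \<or> b = b' \<longrightarrow> (a, b) = (a', b')"
      using inj unfolding M_def inj_on_def by auto
  qed
  moreover have "card M = card (Domain B)"
    unfolding M_def by (rule card_image) (simp add: inj_on_def)
  ultimately show ?thesis using card_le_max_matching_size by metis
qed

lemma omnians_minus_matching_le_tree_leaves:
  assumes T: "rooted_spanning_tree V A T"
  shows "card (omnians V A X) - max_matching_size V A X \<le> card (tree_leaves V T - X)"
proof -
  let ?O = "omnians V A X"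
  define B where "B = T \<inter> ?O \<times> UNIV"
  have "B \<subseteq> A" using T unfolding B_def rooted_spanning_tree_iff by auto
  moreover have "single_valued (converse B)"
    using tree_parent_unique[OF T] unfolding B_def single_valued_def by blast
  ultimately have "card (Domain B) \<le> max_matching_size V A X"
    by (intro card_Domain_le_max_matching_size) (auto simp: B_def)
  moreover have "tree_leaves V T - X = ?O - Domain B"
    unfolding tree_leaves_Diff_X[OF T] B_def by blast
  moreover have "card (?O - Domain B) = card ?O - card (Domain B)"
    by (rule card_Diff_subset) (auto simp: B_def intro: finite_subset[OF _ finite_omnians])
  ultimately show ?thesis by simp
qed

text \<open>Every reticulation matched by a maximum matching takes its matched omnian as tree parent.\<close>
lemma spanning_tree_from_max_matching:
  obtains T where "rooted_spanning_tree V A T"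
    and "card (tree_leaves V T - X) \<le> card (omnians V A X) - max_matching_size V A X"
proof -
  let ?O = "omnians V A X"
  obtain M where M: "BN_matching V A X M" "card M = max_matching_size V A X"
    using max_matching_exists by blast
  have MA: "M \<subseteq> A" using M(1) unfolding BN_matching_def by simp
  have M_heads: "\<And>a b z. (a, z) \<in> M \<Longrightarrow> (b, z) \<in> M \<Longrightarrow> a = b"
    using M(1) unfolding BN_matching_def by fast
  define f where "f v = (if v \<in> Range M then THE q. (q, v) \<in> M else SOME u. (u, v) \<in> A)" for v
  have f_M: "f v = q" if "(q, v) \<in> M" for q v
    using that M_heads unfolding f_def by auto
  have "(f v, v) \<in> A" if "v \<in> V - {r}" for v
  proof (cases "v \<in> Range M")
    case True
    then show ?thesis using f_M MA by auto
  next
    case False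
    have "\<exists>u. (u, v) \<in> A" using that parentless_iff_root by blast
    then show ?thesis using False unfolding f_def by (auto intro: someI_ex)
  qed
  then have T: "rooted_spanning_tree V A {(f v, v) | v. v \<in> V - {r}}" (is "rooted_spanning_tree V A ?T")
    by (intro rooted_spanning_tree_of_parent_fun) blast
  have "Domain M \<subseteq> Domain ?T"
  proof
    fix q assume "q \<in> Domain M"
    then obtain v where qv: "(q, v) \<in> M" by blast
    then have "v \<in> V - {r}" using MA arcs_in_V parentless_iff_root by auto
    with qv show "q \<in> Domain ?T" using f_M by blast
  qed
  then have "card (tree_leaves V ?T - X) \<le> card (?O - Domain M)"
    unfolding tree_leaves_Diff_X[OF T] by (intro card_mono) (auto intro: finite_omnians)
  also have "\<dots> = card ?O - card M"
    using card_Diff_subset[OF finite_subset[OF _ finite_omnians] BN_matching_Domain_subset[OF M(1)]]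
      BN_matching_Domain_subset[OF M(1)] card_Domain_BN_matching[OF M(1)] by simp
  finally show ?thesis using that T M(2) by simp
qed

lemma l_num_le:
  "rooted_spanning_tree V A T \<Longrightarrow> l_num V A X \<le> card (tree_leaves V T - X)"
  unfolding l_num_def by (rule Least_le) blast

lemma l_num_attained:
  obtains T where "rooted_spanning_tree V A T" "card (tree_leaves V T - X) = l_num V A X"
proof -
  obtain T where "rooted_spanning_tree V A T" using spanning_tree_from_max_matching by blast
  then show ?thesis
    using that LeastI_ex[of "\<lambda>k. \<exists>T. rooted_spanning_tree V A T \<and> card (tree_leaves V T - X) = k"]
    unfolding l_num_def by blast
qed

lemma l_num_eq: "l_num V A X = card (omnians V A X) - max_matching_size V A X"
  using l_num_attained l_num_le spanning_tree_from_max_matching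
    omnians_minus_matching_le_tree_leaves by (metis order.antisym order.trans)

section \<open>Path partitions of the network\<close>

lemma card_V_split: "card (V - X - omnians V A X) + card X + card (omnians V A X) = card V"
proof -
  have "card (V - X - omnians V A X) = card (V - X) - card (omnians V A X)"
    using omnians_subset finite_V by (meson card_Diff_subset finite_Diff finite_subset)
  moreover have "card (V - X) = card V - card X"
    using X_subset_V finite_V by (meson card_Diff_subset finite_subset)
  moreover have "card (omnians V A X) \<le> card (V - X)"
    using omnians_subset finite_V by (simp add: card_mono)
  moreover have "card X \<le> card V" using X_subset_V finite_V by (simp add: card_mono)
  ultimately show ?thesis by linarith
qed

text \<open>The tails of S are distinct non-leaves; those that are omnians carry a matching.\<close>
lemma card_le_if_single_valued:
  assumes S: "S \<subseteq> A" "single_valued S" "single_valued (converse S)"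
  shows "card S \<le> max_matching_size V A X + card (V - X - omnians V A X)"
proof -
  let ?O = "omnians V A X"
  define B where "B = S \<inter> ?O \<times> UNIV"
  have "inj_on fst S" using S(2) unfolding inj_on_def single_valued_def by auto
  then have "card S = card (Domain S)" by (simp add: Domain_fst card_image)
  also have "\<dots> \<le> card (Domain B) + card (Domain S - ?O)"
    by (rule order.trans[OF card_mono card_Un_le])
      (auto simp: B_def intro: finite_subset[OF _ finite_V] dest: subsetD[OF S(1)] subsetD[OF arcs_in_V])
  also have "card (Domain B) \<le> max_matching_size V A X"
  proof (rule card_Domain_le_max_matching_size)
    show "single_valued (converse B)"
      by (rule single_valued_subset[OF _ S(3)]) (auto simp: B_def)
  qed (use S(1) in \<open>auto simp: B_def\<close>)
  also have "Domain S - ?O \<subseteq> V - X - ?O"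
    using S(1) arcs_in_V leaves_eq_sinks by auto
  then have "card (Domain S - ?O) \<le> card (V - X - ?O)"
    using finite_V by (intro card_mono) auto
  finally show ?thesis by simp
qed

lemma non_reticulation_child_arcs:
  obtains C where "C \<subseteq> A" "single_valued C" "Domain C = V - X - omnians V A X"
    and "\<forall>b\<in>Range C. \<not> reticulation V A b"
proof -
  define c where "c v = (SOME w. (v, w) \<in> A \<and> \<not> reticulation V A w)" for v
  have c: "(v, c v) \<in> A \<and> \<not> reticulation V A (c v)" if "v \<in> V - X - omnians V A X" for v
  proof -
    have "\<exists>w. (v, w) \<in> A \<and> \<not> reticulation V A w" using that unfolding omnians_def by auto
    then show ?thesis unfolding c_def by (rule someI_ex)
  qed
  show ?thesis
  proof (rule that[of "(\<lambda>v. (v, c v)) ` (V - X - omnians V A X)"])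
    show "single_valued ((\<lambda>v. (v, c v)) ` (V - X - omnians V A X))"
      by (rule single_valuedI) auto
  qed (use c in auto)
qed

text \<open>Matching arcs end in reticulations and the arcs of C do not; heads of C are distinct since
  non-reticulations have a unique parent.\<close>
lemma single_valued_BN_matching_Un:
  assumes M: "BN_matching V A X M"
    and C: "C \<subseteq> A" "single_valued C" "Domain C = V - X - omnians V A X"
      "\<forall>b\<in>Range C. \<not> reticulation V A b"
  shows "single_valued (M \<union> C)" "single_valued (converse (M \<union> C))"
    and "card (M \<union> C) = card M + card (V - X - omnians V A X)"
proof -
  have M_arc: "a \<in> omnians V A X \<and> reticulation V A b" if "(a, b) \<in> M" for a b
    using M that unfolding BN_matching_def reticulations_def by auto
  have M_unique: "a = a' \<and> b = b'" if "(a, b) \<in> M" "(a', b') \<in> M" "a = a' \<or> b = b'" for a b a' b'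
    using M that unfolding BN_matching_def by fast
  have C_tail: "a \<notin> omnians V A X" if "(a, b) \<in> C" for a b
    using C(3) that by blast
  show "single_valued (M \<union> C)"
  proof (rule single_valuedI)
    fix a b d assume "(a, b) \<in> M \<union> C" "(a, d) \<in> M \<union> C"
    then show "b = d" using M_arc C_tail M_unique C(2) unfolding single_valued_def by blast
  qed
  show "single_valued (converse (M \<union> C))"
  proof (rule single_valuedI)
    fix d a b assume "(d, a) \<in> converse (M \<union> C)" "(d, b) \<in> converse (M \<union> C)"
    then have ad: "(a, d) \<in> M \<union> C" and bd: "(b, d) \<in> M \<union> C" by auto
    show "a = b"
    proof (cases "reticulation V A d")
      case True
      then have "(a, d) \<in> M" "(b, d) \<in> M" using ad bd C(4) by blast+
      then show ?thesis using M_unique by blast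
    next
      case False
      then have "(a, d) \<in> A" "(b, d) \<in> A" using ad bd M_arc C(1) by blast+
      then show ?thesis using parent_unique_if_not_reticulation[OF False] by blast
    qed
  qed
  have "M \<inter> C = {}" using M_arc C_tail by fastforce
  moreover have "inj_on fst C" using C(2) unfolding inj_on_def single_valued_def by auto
  then have "card C = card (V - X - omnians V A X)" using C(3) by (metis Domain_fst card_image)
  moreover have "finite M" "finite C"
    using M C(1) finite_A finite_subset unfolding BN_matching_def by blast+
  ultimately show "card (M \<union> C) = card M + card (V - X - omnians V A X)"
    by (simp add: card_Un_disjoint)
qed

lemma linear_forest_from_max_matching:
  obtains S where "S \<subseteq> A" "single_valued S" "single_valued (converse S)"
    and "card S = max_matching_size V A X + card (V - X - omnians V A X)"
proof -
  obtain M where M: "BN_matching V A X M" "card M = max_matching_size V A X"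
    using max_matching_exists by blast
  obtain C where C: "C \<subseteq> A" "single_valued C" "Domain C = V - X - omnians V A X"
    "\<forall>b\<in>Range C. \<not> reticulation V A b"
    by (rule non_reticulation_child_arcs)
  have "M \<union> C \<subseteq> A" using M(1) C(1) unfolding BN_matching_def by blast
  from that[OF this single_valued_BN_matching_Un(1,2)[OF M(1) C]] show ?thesis
    using single_valued_BN_matching_Un(3)[OF M(1) C] M(2) by simp
qed

lemma d_num_eq: "d_num V A = card X + card (omnians V A X) - max_matching_size V A X"
  unfolding d_num_def
proof (rule Least_equality)
  obtain S where S: "S \<subseteq> A" "single_valued S" "single_valued (converse S)"
    and card_S: "card S = max_matching_size V A X + card (V - X - omnians V A X)"
    using linear_forest_from_max_matching by blast
  have "acyclic S" using acyclic_subset[OF acyclic_A S(1)] .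
  then obtain P where "path_partition V S P" "card P + card S = card V"
    using path_partition_of_linear_forest[OF finite_V _ _ S(2,3)] S(1) arcs_in_V by blast
  then show "\<exists>P. path_partition V A P \<and> card P = card X + card (omnians V A X) - max_matching_size V A X"
    using path_partition_mono S(1) card_S card_V_split by (intro exI[of _ P]) auto
next
  fix k assume "\<exists>P. path_partition V A P \<and> card P = k"
  then obtain P where P: "path_partition V A P" "card P = k" by blast
  then show "card X + card (omnians V A X) - max_matching_size V A X \<le> k"
    using card_path_successors[OF P(1)] card_V_split path_successors_subset[OF P(1)]
      card_le_if_single_valued[OF _ single_valued_path_successors[OF P(1)]
        single_valued_converse_path_successors[OF P(1)]]
    by fastforce
qed

end

section \<open>Attaching leaves\<close>

locale leaf_attachment = rooted_dag +
  fixes u v w y :: nat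
  assumes arc_uv: "(u, v) \<in> A" and w_fresh: "w \<notin> V" and y_fresh: "y \<notin> V" and w_ne_y: "w \<noteq> y"
begin

abbreviation "V' \<equiv> V \<union> {w, y}"
abbreviation "A' \<equiv> A - {(u, v)} \<union> {(u, w), (w, v), (w, y)}"
abbreviation "X' \<equiv> X \<union> {y}"

lemma in_attach_leaf_rel: "((V, A, X), (V', A', X')) \<in> attach_leaf_rel"
  unfolding attach_leaf_rel_def using arc_uv w_fresh y_fresh w_ne_y by auto

lemma u_in_V: "u \<in> V" and v_in_V: "v \<in> V"
  using arc_uv arcs_in_V by auto

lemma not_in_V_isolated: "z \<notin> V \<Longrightarrow> (z, t) \<notin> A \<and> (t, z) \<notin> A"
  using arcs_in_V by auto

lemma acyclic_attached: "acyclic A'"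
proof -
  have "(w, u) \<notin> A\<^sup>*"
  proof
    assume "(w, u) \<in> A\<^sup>*"
    then show False using w_fresh u_in_V not_in_V_isolated by (cases rule: converse_rtranclE) auto
  qed
  moreover have "(v, w) \<notin> (insert (u, w) A)\<^sup>*"
  proof
    assume "(v, w) \<in> (insert (u, w) A)\<^sup>*"
    then have "(v, w) \<in> A\<^sup>* \<or> (v, u) \<in> A\<^sup>*" by (auto simp: rtrancl_insert)
    moreover have "(v, w) \<notin> A\<^sup>*"
    proof
      assume "(v, w) \<in> A\<^sup>*"
      then show False using w_fresh v_in_V not_in_V_isolated by (cases rule: rtranclE) auto
    qed
    moreover have "(v, u) \<notin> A\<^sup>*"
      using arc_uv acyclic_A unfolding acyclic_def by (meson rtrancl_into_trancl2)
    ultimately show False by blast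
  qed
  moreover have "(y, w) \<notin> (insert (w, v) (insert (u, w) A))\<^sup>*"
    using y_fresh w_ne_y u_in_V not_in_V_isolated by (auto elim: converse_rtranclE)
  ultimately have "acyclic (insert (w, y) (insert (w, v) (insert (u, w) A)))"
    using acyclic_A by simp
  then show ?thesis by (rule acyclic_subset) auto
qed

lemma rooted_dag_attached: "rooted_dag V' A' X' r"
proof
  show "finite V'" using finite_V by simp
  show "A' \<subseteq> V' \<times> V'" using arcs_in_V u_in_V v_in_V by auto
  show "acyclic A'" by (rule acyclic_attached)
  show "r \<in> V'" using root_in_V by simp
  have "v \<noteq> r" using arc_uv v_in_V parentless_iff_root by blast
  show "(\<forall>x. (x, z) \<notin> A') \<longleftrightarrow> z = r" if "z \<in> V'" for z
  proof (cases "z \<in> V - {v}")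
    case True
    then have "(x, z) \<in> A' \<longleftrightarrow> (x, z) \<in> A" for x using w_fresh y_fresh by auto
    then show ?thesis using True parentless_iff_root by auto
  qed (use that \<open>v \<noteq> r\<close> root_in_V w_fresh y_fresh in auto)
  show "X' = {z \<in> V'. \<forall>t. (z, t) \<notin> A'}"
    using leaves_eq_sinks arc_uv w_fresh y_fresh w_ne_y u_in_V not_in_V_isolated by auto
qed

sublocale attached: rooted_dag V' A' X' r
  by (rule rooted_dag_attached)

text \<open>Removing the new leaf and suppressing the subdivision vertex turns a spanning tree of the
  new network into one of the old network whose only possible new childless non-leaf is u.\<close>
lemma spanning_tree_detached:
  assumes T': "rooted_spanning_tree V' A' T'"
  obtains T where "rooted_spanning_tree V A T" "tree_leaves V T - X \<subseteq> insert u (tree_leaves V' T' - X')"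
proof -
  define f where "f z = (if (w, z) \<in> T' then u else THE p. (p, z) \<in> T')" for z
  have T'_sub: "T' \<subseteq> A'" using T'(1) unfolding rooted_spanning_tree_def by blast
  have T'_parent: "(f z, z) \<in> T'" if "z \<in> V - {r}" "(w, z) \<notin> T'" for z
  proof -
    have "z \<in> V'" "z \<noteq> r" using that by auto
    then obtain p where p: "(p, z) \<in> T'" by (rule attached.tree_parent_exists[OF T'(1)])
    have "(THE p. (p, z) \<in> T') = p"
      by (rule the_equality) (use p attached.tree_parent_unique[OF T'(1)] in blast)+
    then show ?thesis unfolding f_def using that(2) p by simp
  qed
  have "(f z, z) \<in> A" if z: "z \<in> V - {r}" for z
  proof (cases "(w, z) \<in> T'")
    case True
    then have "(w, z) \<in> A'" using T'_sub by blast
    then have "z = v" using z w_fresh y_fresh not_in_V_isolated by auto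
    then show ?thesis using True arc_uv unfolding f_def by simp
  next
    case False
    then have "(f z, z) \<in> A'" "f z \<noteq> w" using T'_parent[OF z] T'_sub by auto
    then show ?thesis using z w_fresh y_fresh by auto
  qed
  then have T: "rooted_spanning_tree V A {(f z, z) | z. z \<in> V - {r}}" (is "rooted_spanning_tree V A ?T")
    by (intro rooted_spanning_tree_of_parent_fun) blast
  moreover have "tree_leaves V ?T - X \<subseteq> insert u (tree_leaves V' T' - X')"
  proof
    fix z assume z: "z \<in> tree_leaves V ?T - X"
    have "(z, t) \<notin> T'" if "z \<noteq> u" for t
    proof
      assume zt: "(z, t) \<in> T'"
      then have "(z, t) \<in> A'" using T'_sub by blast
      then have "(z, t) \<in> A" using that z w_fresh unfolding tree_leaves_def by auto
      then have "t \<in> V - {r}" using arcs_in_V parentless_iff_root by auto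
      moreover have "(w, t) \<notin> T'"
        using zt attached.tree_parent_unique[OF T'(1)] z w_fresh unfolding tree_leaves_def by blast
      ultimately have "f t = z" using T'_parent zt attached.tree_parent_unique[OF T'(1)] by blast
      then show False using z \<open>t \<in> V - {r}\<close> unfolding tree_leaves_def by blast
    qed
    then show "z \<in> insert u (tree_leaves V' T' - X')"
      using z y_fresh unfolding tree_leaves_def by auto
  qed
  ultimately show ?thesis using that by blast
qed

lemma l_num_le_attached: "l_num V A X \<le> l_num V' A' X' + 1"
proof -
  obtain T' where T': "rooted_spanning_tree V' A' T'" "card (tree_leaves V' T' - X') = l_num V' A' X'"
    using attached.l_num_attained by blast
  obtain T where T: "rooted_spanning_tree V A T" "tree_leaves V T - X \<subseteq> insert u (tree_leaves V' T' - X')"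
    using spanning_tree_detached[OF T'(1)] by blast
  have "card (tree_leaves V T - X) \<le> card (insert u (tree_leaves V' T' - X'))"
    using T(2) by (rule card_mono[rotated]) (simp add: finite_V tree_leaves_def)
  also have "\<dots> \<le> card (tree_leaves V' T' - X') + 1"
    by (simp add: card_insert_if finite_V tree_leaves_def)
  finally show ?thesis using l_num_le[OF T(1)] T'(2) by simp
qed

text \<open>Attached below a childless non-leaf u of a spanning tree, the new vertex becomes the tree
  child of u.\<close>
lemma l_num_attached_below_tree_leaf:
  assumes T: "rooted_spanning_tree V A T" and u: "u \<in> tree_leaves V T"
  shows "l_num V' A' X' + 1 \<le> card (tree_leaves V T - X)"
proof -
  define T' where "T' = T \<union> {(u, w), (w, y)}"
  have T_sub: "T \<subseteq> A" using T unfolding rooted_spanning_tree_def by blast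
  have "(u, v) \<notin> T" using u unfolding tree_leaves_def by blast
  have T': "rooted_spanning_tree V' A' T'"
    unfolding attached.rooted_spanning_tree_iff
  proof (intro conjI ballI)
    show "T' \<subseteq> A'" using T_sub \<open>(u, v) \<notin> T\<close> unfolding T'_def by auto
    fix z assume z: "z \<in> V' - {r}"
    have "{p. (p, z) \<in> T'} = (if z = w then {u} else if z = y then {w} else {p. (p, z) \<in> T})"
      using T_sub arcs_in_V w_fresh y_fresh w_ne_y unfolding T'_def by auto
    then show "card {p. (p, z) \<in> T'} = 1" using z T unfolding rooted_spanning_tree_iff by auto
  qed
  have "tree_leaves V' T' - X' \<subseteq> tree_leaves V T - X - {u}"
  proof
    fix z assume z: "z \<in> tree_leaves V' T' - X'"
    then have "z \<noteq> w" "z \<noteq> u" "z \<noteq> y" unfolding tree_leaves_def T'_def by auto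
    with z show "z \<in> tree_leaves V T - X - {u}" unfolding tree_leaves_def T'_def by auto
  qed
  then have "card (tree_leaves V' T' - X') \<le> card (tree_leaves V T - X - {u})"
    by (rule card_mono[rotated]) (simp add: finite_V tree_leaves_def)
  moreover have "u \<in> tree_leaves V T - X" using u arc_uv leaves_eq_sinks by auto
  moreover have "finite (tree_leaves V T - X)" by (simp add: finite_V tree_leaves_def)
  ultimately have "card (tree_leaves V' T' - X') + 1 \<le> card (tree_leaves V T - X)"
    by (metis card_Diff1_less_iff Suc_eq_plus1 Suc_leI order.strict_trans1)
  then show ?thesis using attached.l_num_le[OF T'] by simp
qed

end

context rooted_dag
begin

lemma tree_based_iff_l_num_0: "tree_based V A X \<longleftrightarrow> l_num V A X = 0"
proof
  assume "tree_based V A X"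
  then obtain T where T: "rooted_spanning_tree V A T" and "tree_leaves V T - X = {}"
    unfolding tree_based_def by blast
  with l_num_le[OF T] show "l_num V A X = 0" by simp
next
  assume "l_num V A X = 0"
  moreover obtain T where "rooted_spanning_tree V A T" "card (tree_leaves V T - X) = l_num V A X"
    by (rule l_num_attained)
  moreover have "finite (tree_leaves V T - X)" by (simp add: finite_V tree_leaves_def)
  ultimately show "tree_based V A X" unfolding tree_based_def by auto
qed

lemma attachment_decreasing_l_num:
  assumes "l_num V A X = Suc n"
  obtains V' A' X' where "((V, A, X), (V', A', X')) \<in> attach_leaf_rel"
    and "rooted_dag V' A' X' r" and "l_num V' A' X' = n"
proof -
  obtain T where T: "rooted_spanning_tree V A T" "card (tree_leaves V T - X) = Suc n"
    using l_num_attained assms by metis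
  then obtain u where u: "u \<in> tree_leaves V T" "u \<notin> X"
    by (metis card.empty DiffE ex_in_conv nat.distinct(1))
  then obtain v where "(u, v) \<in> A" using leaves_eq_sinks unfolding tree_leaves_def by blast
  moreover obtain w where "w \<notin> V" using ex_new_if_finite[OF infinite_UNIV_nat finite_V] by blast
  moreover obtain y where "y \<notin> insert w V"
    using ex_new_if_finite[OF infinite_UNIV_nat] finite_V by blast
  ultimately interpret leaf_attachment V A X r u v w y
    by unfold_locales auto
  have "l_num V' A' X' = n"
    using l_num_attached_below_tree_leaf[OF T(1) u(1)] l_num_le_attached T(2) assms by simp
  then show ?thesis using that in_attach_leaf_rel rooted_dag_attached by blast
qed

end

lemma attach_leaf_relE:
  assumes "((V, A, X), N') \<in> attach_leaf_rel" and "rooted_dag V A X r"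
  obtains u v w y where "leaf_attachment V A X r u v w y"
    and "N' = (V \<union> {w, y}, A - {(u, v)} \<union> {(u, w), (w, v), (w, y)}, X \<union> {y})"
  using assms unfolding attach_leaf_rel_def leaf_attachment_def leaf_attachment_axioms_def by blast

lemma l_num_le_attachments:
  "((V, A, X), (V', A', X')) \<in> attach_leaf_rel ^^ k \<Longrightarrow> rooted_dag V A X r \<Longrightarrow>
    tree_based V' A' X' \<Longrightarrow> l_num V A X \<le> k"
proof (induction k arbitrary: V A X)
  case 0
  then show ?case using rooted_dag.tree_based_iff_l_num_0 by simp
next
  case (Suc k)
  then obtain N where N: "((V, A, X), N) \<in> attach_leaf_rel" "(N, (V', A', X')) \<in> attach_leaf_rel ^^ k"
    by (meson relpow_Suc_D2)
  then obtain u v w y where att: "leaf_attachment V A X r u v w y"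
    and N_eq: "N = (V \<union> {w, y}, A - {(u, v)} \<union> {(u, w), (w, v), (w, y)}, X \<union> {y})"
    using attach_leaf_relE Suc.prems(2) by blast
  show ?case
    using Suc.IH[OF N(2)[unfolded N_eq] leaf_attachment.rooted_dag_attached[OF att] Suc.prems(3)]
      leaf_attachment.l_num_le_attached[OF att] by simp
qed

lemma attachments_to_tree_based:
  "rooted_dag V A X r \<Longrightarrow>
    \<exists>V' A' X'. ((V, A, X), (V', A', X')) \<in> attach_leaf_rel ^^ l_num V A X \<and> tree_based V' A' X'"
proof (induction "l_num V A X" arbitrary: V A X)
  case 0
  then show ?case using rooted_dag.tree_based_iff_l_num_0 by fastforce
next
  case (Suc n)
  obtain V1 A1 X1 where step: "((V, A, X), (V1, A1, X1)) \<in> attach_leaf_rel"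
    and "rooted_dag V1 A1 X1 r" "l_num V1 A1 X1 = n"
    using rooted_dag.attachment_decreasing_l_num[OF Suc.prems Suc.hyps(2)[symmetric]] by blast
  then show ?case
    using Suc.hyps(1)[of V1 A1 X1] Suc.hyps(2) relpow_Suc_I2[OF step] by metis
qed

lemma (in rooted_dag) t_num_eq_l_num: "t_num V A X = l_num V A X"
  unfolding t_num_def
proof (rule Least_equality)
  show "\<exists>V' A' X'. ((V, A, X), (V', A', X')) \<in> attach_leaf_rel ^^ l_num V A X \<and> tree_based V' A' X'"
    using attachments_to_tree_based rooted_dag_axioms by blast
qed (use l_num_le_attachments rooted_dag_axioms in blast)

theorem theorem6:
  fixes V X :: "nat set" and A :: "(nat \<times> nat) set"
  assumes "phylo_net V A X"
  shows "int (l_num V A X) = p_num V A X \<and>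
         p_num V A X = int (t_num V A X) \<and>
         int (t_num V A X) = int (card (omnians V A X)) - int (max_matching_size V A X)"
proof -
  interpret rooted_dag V A X "root V A"
    using phylo_net_rooted_dag[OF assms] .
  show ?thesis
    unfolding p_num_def d_num_eq t_num_eq_l_num l_num_eq
    using max_matching_size_le_omnians by simp
qed

end
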